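(* Let $\bowtie$ be a $4\times n$ Latin rectangle with two colors $R,B$. Define the six column types (listed top to bottom) $b_1=(R,R,B,B)^T$, $b_2=(B,B,R,R)^T$, $b_3=(R,B,B,R)^T$, $b_4=(B,R,R,B)^T$, $b_5=(R,B,R,B)^T$, $b_6=(B,R,B,R)^T$, and let $\mu_i$ be the number of columns of $\bowtie$ of type $b_i$. Then $\mu_1=\mu_2$, $\mu_3=\mu_4$, and $\mu_5=\mu_6$.
   Context: A Latin rectangle is an $a\times b$ array of colored nodes such that each color appears the same number of times in every row and each color appears the same number of times in every column. The pairs $(b_1,b_2)$, $(b_3,b_4)$, $(b_5,b_6)$ are color-complementary pairs of columns (each is obtained from the other by swapping $R$ and $B$). *)

theory Defs
  imports Main
begin

datatype color = R | B

text \<open>An a x b array is a function A, with entry A i j for row i < a and column j < b.\<close>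
definition latin_rectangle :: "nat \<Rightarrow> nat \<Rightarrow> (nat \<Rightarrow> nat \<Rightarrow> color) \<Rightarrow> bool" where
  "latin_rectangle a b A \<longleftrightarrow>
     (\<forall>i<a. \<forall>c c'. card {j. j < b \<and> A i j = c} = card {j. j < b \<and> A i j = c'}) \<and>
     (\<forall>j<b. \<forall>c c'. card {i. i < a \<and> A i j = c} = card {i. i < a \<and> A i j = c'})"

definition column4 :: "(nat \<Rightarrow> nat \<Rightarrow> color) \<Rightarrow> nat \<Rightarrow> color list" where
  "column4 A j = map (\<lambda>i. A i j) [0..<4]"

definition mu :: "nat \<Rightarrow> (nat \<Rightarrow> nat \<Rightarrow> color) \<Rightarrow> color list \<Rightarrow> nat" where
  "mu n A v = card {j. j < n \<and> column4 A j = v}"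

definition b1 :: "color list" where "b1 = [R, R, B, B]"
definition b2 :: "color list" where "b2 = [B, B, R, R]"
definition b3 :: "color list" where "b3 = [R, B, B, R]"
definition b4 :: "color list" where "b4 = [B, R, R, B]"
definition b5 :: "color list" where "b5 = [R, B, R, B]"
definition b6 :: "color list" where "b6 = [B, R, B, R]"

end

theory Submission
  imports Defs
begin

text \<open>Every column of a 4-row Latin rectangle holds two R and two B, so it has one of the six
  types b1, ..., b6. Counting the R and B entries of row i by column type turns the row
  condition into a linear equation in the mu's; the equations of the first three rows
  already force the complementary counts to agree.\<close>

lemma length_column4 [simp]: "length (column4 A j) = 4"
  by (simp add: column4_def)

lemma nth_column4 [simp]: "i < 4 \<Longrightarrow> column4 A j ! i = A i j"
  by (simp add: column4_def)

lemma card_column_color_eq_count: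
  "card {i. i < 4 \<and> A i j = c} = length (filter ((=) c) (column4 A j))"
  by (auto simp: length_filter_conv_card intro: arg_cong[where f = card])

lemma balanced_color_list4_cases:
  assumes "length xs = 4"
    and "length (filter ((=) R) xs) = length (filter ((=) B) xs)"
  shows "xs \<in> {b1, b2, b3, b4, b5, b6}"
proof -
  obtain x0 x1 x2 x3 where "xs = [x0, x1, x2, x3]"
    using assms(1) by (auto simp: numeral_eq_Suc length_Suc_conv)
  with assms(2) show ?thesis
    by (cases x0; cases x1; cases x2; cases x3)
       (simp_all add: b1_def b2_def b3_def b4_def b5_def b6_def)
qed

lemma latin_rectangle4_column_types:
  assumes "latin_rectangle 4 n A" "j < n"
  shows "column4 A j \<in> {b1, b2, b3, b4, b5, b6}"
proof (rule balanced_color_list4_cases)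
  show "length (filter ((=) R) (column4 A j)) = length (filter ((=) B) (column4 A j))"
    using assms unfolding latin_rectangle_def card_column_color_eq_count by blast
qed simp

lemma card_row_color_eq_sum_mu:
  assumes "finite T" "\<And>j. j < n \<Longrightarrow> column4 A j \<in> T" "i < 4"
  shows "card {j. j < n \<and> A i j = c} = (\<Sum>v\<in>T. if v ! i = c then mu n A v else 0)"
proof -
  have "card {j. j < n \<and> A i j = c} = (\<Sum>j | j < n. if A i j = c then 1 else 0)"
    by (simp add: sum.If_cases Int_def conj_commute)
  also have "\<dots> = (\<Sum>v\<in>T. \<Sum>j | j < n \<and> column4 A j = v. if A i j = c then 1 else 0)"
    using assms(1,2) by (subst sum.group[symmetric]) auto
  also have "\<dots> = (\<Sum>v\<in>T. if v ! i = c then mu n A v else 0)"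
  proof (rule sum.cong)
    fix v
    have "A i j = v ! i" if "column4 A j = v" for j
      using assms(3) that by auto
    then show "(\<Sum>j | j < n \<and> column4 A j = v. if A i j = c then 1 else 0)
        = (if v ! i = c then mu n A v else 0)"
      by (simp add: mu_def)
  qed simp
  finally show ?thesis .
qed

theorem lemma9p6:
  fixes n :: nat and A :: "nat \<Rightarrow> nat \<Rightarrow> color"
  assumes "latin_rectangle 4 n A"
  shows "mu n A b1 = mu n A b2 \<and> mu n A b3 = mu n A b4 \<and> mu n A b5 = mu n A b6"
proof -
  let ?T = "{b1, b2, b3, b4, b5, b6}"
  have columns: "\<And>j. j < n \<Longrightarrow> column4 A j \<in> ?T"
    using assms by (rule latin_rectangle4_column_types)
  have row_balance: "(\<Sum>v\<in>?T. if v ! i = R then mu n A v else 0)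
      = (\<Sum>v\<in>?T. if v ! i = B then mu n A v else 0)" if "i < 4" for i
  proof -
    have "card {j. j < n \<and> A i j = R} = card {j. j < n \<and> A i j = B}"
      using assms that unfolding latin_rectangle_def by blast
    then show ?thesis
      using card_row_color_eq_sum_mu[OF _ columns that] by simp
  qed
  \<comment> \<open>Adding the balance equations of rows 0 and 1 (resp. 0 and 2, 1 and 2) isolates each pair.\<close>
  from row_balance[of 0] row_balance[of 1] row_balance[of 2] show ?thesis
    by (simp add: b1_def b2_def b3_def b4_def b5_def b6_def)
qed

end
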